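(* Let $G=(V,E)$ be a connected undirected graph on $n$ nodes, let $N_i$ denote the set of neighbours of node $i$, let $K>0$, and let $\bar w_1,\dots,\bar w_n\in\mathbb{R}$ satisfy $\sum_i\bar w_i=0$. Consider solutions $\vec\phi^t\in\mathbb{R}^n$, $t\ge0$, of $$\dot\phi_i=\bar w_i+\frac{K}{n}\sum_{k\in N_i}\sin(\phi_k-\phi_i),\qquad i=1,\dots,n,$$ with initial phases satisfying $\sum_{i=1}^n\phi_i^0=0$. Let $D_0=\max_i\phi_i^0-\min_i\phi_i^0$, $\mathcal{E}_0=\sum_{i=1}^n(\phi_i^0)^2$, $\sigma(\bar w)=\sqrt{\sum_{i=1}^n\bar w_i^2}$, and $L=\bigl(1+\sum_{(k,l)\in E^c}\mathrm{dist}(k,l)\bigr)^{-1}$, where $E^c$ is the set of unordered pairs of distinct nodes that are not edges of $G$ and $\mathrm{dist}(k,l)$ is the shortest-path distance in $G$. Let $D$ be a constant with $0<D_0\le D<\pi$ and suppose $\mathcal{E}_0<D^2$. For each pair of distinct oscillators $k,l$, let $m_{kl}$ be the optimal (minimal) value of $$\text{minimize }\ \sum_{i\in N_k}\sin(\phi_k-\phi_i)+\sum_{j\in N_l}\sin(\phi_j-\phi_l)\ \text{ over }\vec\phi\in\mathbb{R}^n$$ subject to $\phi_k=\phi_l+D$, $\sum_{m=1}^n\phi_m=0$, $\sum_{m=1}^n\phi_m^2\le\mathcal{E}_0$, and $\phi_l\le\phi_m\le\phi_k$ for all $m=1,\dots,n$; let $K^*_{kl}=\frac{n\,|\bar w_k-\bar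 w_l|}{m_{kl}}$ and $K^*=\max_{k,l}K^*_{kl}$. If $K\ge K^*$ and $$K\ge\frac{\sigma(\bar w)\, D}{\sqrt{\mathcal{E}_0}\,L\,\sin D},$$ then $\max_i\phi_i^t-\min_i\phi_i^t\le D$ for all $t\ge0$ (so the set $\{\vec\phi:\max_{i,j}|\phi_i-\phi_j|\le D,\ \sum_i\phi_i=0\}$ is positively invariant for this solution), and the system achieves frequency synchronization, i.e. the solution approaches the set $\{\vec\phi:\dot\phi_i=0,\ 1\le i\le n\}$.
   Context: This is the Kuramoto model in a frame rotating with the mean natural frequency: $\bar w_i=w_i-\frac1n\sum_k w_k$. Along solutions $\sum_i\phi_i^t$ is constant, hence $0$ for all $t$. Frequency synchronization means convergence of the solution to the set of equilibria of this system. *)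

theory Defs
  imports "HOL-Analysis.Analysis"
begin

text \<open>Graph on the finite vertex type 'n (n = CARD('n) nodes), given by an
adjacency relation E. Walks of length m from k to l.\<close>

definition walk :: "('n \<Rightarrow> 'n \<Rightarrow> bool) \<Rightarrow> 'n \<Rightarrow> 'n \<Rightarrow> nat \<Rightarrow> bool" where
  "walk E k l m \<longleftrightarrow> (\<exists>p :: nat \<Rightarrow> 'n. p 0 = k \<and> p m = l \<and> (\<forall>i<m. E (p i) (p (Suc i))))"

definition graph_connected :: "('n \<Rightarrow> 'n \<Rightarrow> bool) \<Rightarrow> bool" where
  "graph_connected E \<longleftrightarrow> (\<forall>k l. \<exists>m. walk E k l m)"

definition gdist :: "('n \<Rightarrow> 'n \<Rightarrow> bool) \<Rightarrow> 'n \<Rightarrow> 'n \<Rightarrow> nat" where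
  "gdist E k l = (LEAST m. walk E k l m)"

definition kuramoto_field ::
  "('n::finite \<Rightarrow> 'n \<Rightarrow> bool) \<Rightarrow> real \<Rightarrow> real^'n \<Rightarrow> real^'n \<Rightarrow> real^'n" where
  "kuramoto_field E K w x =
     (\<chi> i. w $ i + K / real CARD('n) * (\<Sum>k\<in>{k. E i k}. sin (x $ k - x $ i)))"

definition spread :: "real^'n::finite \<Rightarrow> real" where
  "spread x = Max (range (\<lambda>i. x $ i)) - Min (range (\<lambda>i. x $ i))"

definition energy :: "real^'n::finite \<Rightarrow> real" where
  "energy x = (\<Sum>i\<in>UNIV. (x $ i)^2)"

definition sigma :: "real^'n::finite \<Rightarrow> real" where
  "sigma w = sqrt (\<Sum>i\<in>UNIV. (w $ i)^2)"

text \<open>L = (1 + sum over unordered non-adjacent pairs of distinct nodes of dist)^-1.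
The sum over unordered pairs is half the sum over ordered pairs (dist is symmetric).\<close>
definition Lconst :: "('n::finite \<Rightarrow> 'n \<Rightarrow> bool) \<Rightarrow> real" where
  "Lconst E = 1 / (1 + (\<Sum>(k,l)\<in>{(k,l). k \<noteq> l \<and> \<not> E k l}. real (gdist E k l)) / 2)"

definition feasible :: "real \<Rightarrow> real \<Rightarrow> 'n::finite \<Rightarrow> 'n \<Rightarrow> (real^'n) set" where
  "feasible D E0 k l = {x. x $ k = x $ l + D \<and> (\<Sum>m\<in>UNIV. x $ m) = 0 \<and>
      (\<Sum>m\<in>UNIV. (x $ m)^2) \<le> E0 \<and> (\<forall>m. x $ l \<le> x $ m \<and> x $ m \<le> x $ k)}"

definition objective :: "('n::finite \<Rightarrow> 'n \<Rightarrow> bool) \<Rightarrow> 'n \<Rightarrow> 'n \<Rightarrow> real^'n \<Rightarrow> real" where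
  "objective E k l x = (\<Sum>i\<in>{i. E k i}. sin (x $ k - x $ i)) + (\<Sum>j\<in>{j. E l j}. sin (x $ j - x $ l))"

definition mkl :: "('n::finite \<Rightarrow> 'n \<Rightarrow> bool) \<Rightarrow> real \<Rightarrow> real \<Rightarrow> 'n \<Rightarrow> 'n \<Rightarrow> real" where
  "mkl E D E0 k l = Inf (objective E k l ` feasible D E0 k l)"

definition Kstar_kl :: "('n::finite \<Rightarrow> 'n \<Rightarrow> bool) \<Rightarrow> real^'n \<Rightarrow> real \<Rightarrow> real \<Rightarrow> 'n \<Rightarrow> 'n \<Rightarrow> real" where
  "Kstar_kl E w D E0 k l = real CARD('n) * \<bar>w $ k - w $ l\<bar> / mkl E D E0 k l"

end

theory Submission
  imports Defs
begin

text \<open>The region \<open>energy \<le> E0, spread \<le> D\<close> is positively invariant. On its boundary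
  either some pair \<open>k, l\<close> attains the difference \<open>D\<close>, and \<open>K \<ge> K\<^sup>*\<^sub>k\<^sub>l\<close> keeps that
  difference from growing, or the energy equals \<open>E0\<close>, and the Poincare inequality of the
  graph Laplacian together with \<open>K \<ge> \<sigma>(w) D / (\<surd>E0 L sin D)\<close> keeps the energy from
  growing. This is made rigorous by a barrier argument on the normalised energy and the
  normalised squared phase differences. The Kuramoto field is the gradient of a potential,
  which is bounded on the region and increases along solutions at rate \<open>|F|\<^sup>2\<close>; Barbalat's
  lemma then gives \<open>F(\<phi>\<^sup>t) \<rightarrow> 0\<close>, and by compactness the solution approaches the set of
  equilibria.\<close>

section \<open>Inequalities for the sine\<close>

lemma abs_sin_diff_le: "\<bar>sin a - sin b\<bar> \<le> \<bar>a - b\<bar>" for a b :: real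
proof -
  have "\<bar>sin a - sin b\<bar> = 2 * \<bar>sin ((a - b) / 2)\<bar> * \<bar>cos ((a + b) / 2)\<bar>"
    by (simp add: sin_diff_sin abs_mult)
  also have "\<dots> \<le> 2 * \<bar>sin ((a - b) / 2)\<bar>"
    using mult_left_mono[OF abs_cos_le_one, of "2 * \<bar>sin ((a - b) / 2)\<bar>"] by simp
  also have "\<dots> \<le> \<bar>a - b\<bar>"
    using abs_sin_x_le_abs_x[of "(a - b) / 2"] by simp
  finally show ?thesis .
qed

lemma mult_cos_le_sin:
  assumes "0 \<le> x" "x \<le> pi"
  shows "x * cos x \<le> sin x"
proof -
  have "(\<lambda>x. sin x - x * cos x) 0 \<le> (\<lambda>x. sin x - x * cos x) x"
  proof (rule DERIV_nonneg_imp_increasing_open[OF assms(1)])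
    fix y assume y: "0 < y" "y < x"
    have "DERIV (\<lambda>x. sin x - x * cos x) y :> y * sin y"
      by (auto intro!: derivative_eq_intros simp: algebra_simps)
    moreover have "0 \<le> y * sin y"
      using y assms by (intro mult_nonneg_nonneg sin_ge_zero) auto
    ultimately show "\<exists>z. DERIV (\<lambda>x. sin x - x * cos x) y :> z \<and> 0 \<le> z" by blast
  qed (intro continuous_intros)
  then show ?thesis by simp
qed

text \<open>\<open>sin x / x\<close> decreases on \<open>(0, \<pi>)\<close>.\<close>

lemma sin_ge_chord:
  assumes "0 < a" "a \<le> D" "D < pi"
  shows "sin D / D * a \<le> sin a"
proof -
  have "(\<lambda>x. - (sin x / x)) a \<le> (\<lambda>x. - (sin x / x)) D"
  proof (rule DERIV_nonneg_imp_increasing_open[OF assms(2)])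
    fix y assume y: "a < y" "y < D"
    have "DERIV (\<lambda>x. - (sin x / x)) y :> (sin y - y * cos y) / y^2"
      using y assms by (auto intro!: derivative_eq_intros simp: field_simps power2_eq_square)
    moreover have "0 \<le> (sin y - y * cos y) / y^2"
      using mult_cos_le_sin[of y] y assms by auto
    ultimately show "\<exists>z. DERIV (\<lambda>x. - (sin x / x)) y :> z \<and> 0 \<le> z" by blast
  next
    show "continuous_on {a..D} (\<lambda>x. - (sin x / x))"
      using assms by (intro continuous_intros) auto
  qed
  then have "sin D / D \<le> sin a / a" by simp
  then show ?thesis using assms by (simp add: field_simps)
qed

lemma mult_sin_ge_chord_square:
  assumes "\<bar>a\<bar> \<le> D" "D < pi"
  shows "sin D / D * a^2 \<le> a * sin a"
proof (cases "a = 0")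
  case False
  have "sin D / D * \<bar>a\<bar> \<le> sin \<bar>a\<bar>"
    using False assms by (intro sin_ge_chord) auto
  then have "\<bar>a\<bar> * (sin D / D * \<bar>a\<bar>) \<le> \<bar>a\<bar> * sin \<bar>a\<bar>"
    by (intro mult_left_mono) auto
  moreover have "\<bar>a\<bar> * sin \<bar>a\<bar> = a * sin a"
    by (cases "0 \<le> a") auto
  ultimately show ?thesis
    by (simp add: power2_eq_square algebra_simps)
qed simp

lemma energy_eq_norm_power2: "energy x = (norm x)^2"
  by (simp add: energy_def norm_vec_def L2_set_def sum_nonneg)

lemma abs_nth_le_sqrt_energy: "\<bar>x $ i\<bar> \<le> sqrt (energy x)"
  by (simp add: energy_eq_norm_power2 component_le_norm_cart)

lemma abs_diff_le_spread: "\<bar>x $ k - x $ l\<bar> \<le> spread x"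
proof -
  have "x $ k \<le> Max (range (\<lambda>i. x $ i))" "x $ l \<le> Max (range (\<lambda>i. x $ i))"
    "Min (range (\<lambda>i. x $ i)) \<le> x $ k" "Min (range (\<lambda>i. x $ i)) \<le> x $ l"
    by auto
  then show ?thesis unfolding spread_def by linarith
qed

lemma spread_le_iff: "spread x \<le> D \<longleftrightarrow> (\<forall>a b. \<bar>x $ a - x $ b\<bar> \<le> D)"
proof
  assume le: "\<forall>a b. \<bar>x $ a - x $ b\<bar> \<le> D"
  have "Max (range (\<lambda>i. x $ i)) \<in> range (\<lambda>i. x $ i)" "Min (range (\<lambda>i. x $ i)) \<in> range (\<lambda>i. x $ i)"
    by (auto intro: Max_in Min_in)
  then obtain a b where "Max (range (\<lambda>i. x $ i)) = x $ a" "Min (range (\<lambda>i. x $ i)) = x $ b"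
    by blast
  with le[rule_format, of a b] show "spread x \<le> D"
    unfolding spread_def by linarith
qed (use abs_diff_le_spread order_trans in blast)

lemma sum_sq_diff_eq:
  fixes x :: "real^'n"
  shows "(\<Sum>i\<in>UNIV. \<Sum>j\<in>UNIV. (x $ i - x $ j)^2)
    = 2 * real CARD('n) * energy x - 2 * (\<Sum>i\<in>UNIV. x $ i)^2"
proof -
  have "(\<Sum>i\<in>UNIV. \<Sum>j\<in>UNIV. (x $ i - x $ j)^2)
      = (\<Sum>i\<in>UNIV. \<Sum>j\<in>UNIV. (x $ i)^2 + (x $ j)^2 - 2 * x $ i * x $ j)"
    by (simp add: power2_diff algebra_simps)
  also have "\<dots> = 2 * real CARD('n) * energy x - 2 * (\<Sum>i\<in>UNIV. x $ i) * (\<Sum>j\<in>UNIV. x $ j)"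
    by (simp add: energy_def sum.distrib sum_subtractf sum_distrib_left sum_distrib_right algebra_simps)
  finally show ?thesis by (simp add: power2_eq_square)
qed

lemma has_real_derivative_vec_nth:
  "(x has_vector_derivative v) F \<Longrightarrow> ((\<lambda>t. x t $ i) has_real_derivative v $ i) F"
  using bounded_linear.has_vector_derivative[OF bounded_linear_vec_nth]
  by (simp add: has_real_derivative_iff_has_vector_derivative)

lemma at_within_atLeast_eq_at: "a < t \<Longrightarrow> at t within {a..} = at (t::real)"
  by (rule at_within_interior) simp

lemma compact_feasible: "compact (feasible D c k l)"
proof (rule compact_eq_bounded_closed[THEN iffD2], intro conjI)
  have "feasible D c k l \<subseteq> cball 0 (sqrt c)"
    by (auto simp: feasible_def energy_eq_norm_power2[symmetric] energy_def real_le_rsqrt)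
  then show "bounded (feasible D c k l)"
    using bounded_cball bounded_subset by blast
  have "feasible D c k l = {x. x $ k = x $ l + D} \<inter> {x. (\<Sum>m\<in>UNIV. x $ m) = 0} \<inter>
      {x. (\<Sum>m\<in>UNIV. (x $ m)^2) \<le> c} \<inter> (\<Inter>m. {x. x $ l \<le> x $ m}) \<inter> (\<Inter>m. {x. x $ m \<le> x $ k})"
    unfolding feasible_def by auto
  also have "closed \<dots>"
    by (intro closed_Int closed_INT ballI closed_Collect_eq closed_Collect_le continuous_intros)
  finally show "closed (feasible D c k l)" .
qed

section \<open>Walks, graph distance and a Poincare inequality\<close>

lemma walk_gdist:
  assumes "graph_connected E"
  shows "walk E k l (gdist E k l)"
proof -
  obtain m where "walk E k l m" using assms unfolding graph_connected_def by blast
  then show ?thesis unfolding gdist_def by (rule LeastI)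
qed

lemma not_walk_less_gdist: "m < gdist E k l \<Longrightarrow> \<not> walk E k l m"
  unfolding gdist_def by (rule not_less_Least)

lemma walk_shortcut:
  assumes p0: "p 0 = k" and pm: "p m = l" and steps: "\<forall>i<m. E (p i) (p (Suc i))"
    and ab: "a < b" "b \<le> m" "p a = p b"
  shows "walk E k l (m - (b - a))"
proof -
  define q where "q r = (if r \<le> a then p r else p (r + (b - a)))" for r
  have "q 0 = k" using p0 by (simp add: q_def)
  moreover have "q (m - (b - a)) = l"
  proof (cases "m - (b - a) \<le> a")
    case True
    then have "m - (b - a) = a" "b = m" using ab by linarith+
    then show ?thesis using ab pm by (simp add: q_def)
  qed (use ab pm in \<open>simp add: q_def\<close>)
  moreover have "E (q i) (q (Suc i))" if i: "i < m - (b - a)" for i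
  proof -
    consider "i < a" | "i = a" | "a < i" by linarith
    then show ?thesis
    proof cases
      case 1
      then show ?thesis using steps ab by (simp add: q_def)
    next
      case 2
      then have "q i = p b" "q (Suc i) = p (Suc b)" "b < m" using ab i by (auto simp: q_def)
      then show ?thesis using steps by simp
    next
      case 3
      then have "q i = p (i + (b - a))" "q (Suc i) = p (Suc (i + (b - a)))" "i + (b - a) < m"
        using ab i by (auto simp: q_def)
      then show ?thesis using steps by simp
    qed
  qed
  ultimately show ?thesis unfolding walk_def by blast
qed

lemma shortest_walk:
  assumes "graph_connected E"
  obtains p where "p 0 = k" "p (gdist E k l) = l" "\<forall>i<gdist E k l. E (p i) (p (Suc i))"
    "inj_on p {0..gdist E k l}"
proof -
  let ?m = "gdist E k l"
  obtain p where p: "p 0 = k" "p ?m = l" "\<forall>i<?m. E (p i) (p (Suc i))"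
    using walk_gdist[OF assms] unfolding walk_def by blast
  have "inj_on p {0..?m}"
  proof (rule inj_onI, rule ccontr)
    fix a b assume ab: "a \<in> {0..?m}" "b \<in> {0..?m}" "p a = p b" "a \<noteq> b"
    then have "walk E k l (?m - (max a b - min a b))"
      using walk_shortcut[OF p, of "min a b" "max a b"] by (auto simp: min_def max_def)
    moreover have "?m - (max a b - min a b) < ?m" using ab by auto
    ultimately show False by (metis not_walk_less_gdist)
  qed
  with p that show ?thesis by blast
qed

lemma graph_connected_has_neighbour:
  assumes "graph_connected E" "k \<noteq> l"
  obtains a where "E k a"
proof -
  obtain p where p: "p 0 = k" "p (gdist E k l) = l" "\<forall>i<gdist E k l. E (p i) (p (Suc i))"
    using walk_gdist[OF assms(1)] unfolding walk_def by blast
  have "0 < gdist E k l" using p(1,2) assms(2) by (cases "gdist E k l") auto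
  with p(1,3) that show ?thesis by auto
qed

lemma sum_edges_swap:
  fixes E :: "'v \<Rightarrow> 'v \<Rightarrow> bool" and g :: "'v \<Rightarrow> 'v \<Rightarrow> 'a::comm_monoid_add"
  assumes "\<And>i j. E i j \<Longrightarrow> E j i"
  shows "(\<Sum>i\<in>UNIV. \<Sum>k\<in>UNIV. if E i k then g i k else 0)
       = (\<Sum>i\<in>UNIV. \<Sum>k\<in>UNIV. if E i k then g k i else 0)"
proof -
  have "E i k \<longleftrightarrow> E k i" for i k using assms by blast
  then show ?thesis by (subst sum.swap) simp
qed

lemma sum_edges_antisym:
  fixes E :: "'v \<Rightarrow> 'v \<Rightarrow> bool" and g :: "'v \<Rightarrow> 'v \<Rightarrow> real"
  assumes "\<And>i j. E i j \<Longrightarrow> E j i" and "\<And>i k. g k i = - g i k"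
  shows "(\<Sum>i\<in>UNIV. \<Sum>k\<in>UNIV. if E i k then g i k else 0) = 0"
proof -
  let ?S = "\<Sum>i\<in>UNIV. \<Sum>k\<in>UNIV. if E i k then g i k else 0"
  have "?S = (\<Sum>i\<in>UNIV. \<Sum>k\<in>UNIV. - (if E i k then g i k else 0))"
  proof -
    have "(if E i k then g k i else 0) = - (if E i k then g i k else 0)" for i k
      using assms(2)[of i k] by simp
    then show ?thesis using sum_edges_swap[of E g, OF assms(1)] by simp
  qed
  also have "\<dots> = - ?S" by (simp add: sum_negf)
  finally show ?thesis by linarith
qed

definition dirichlet_form :: "('n::finite \<Rightarrow> 'n \<Rightarrow> bool) \<Rightarrow> real^'n \<Rightarrow> real" where
  "dirichlet_form E y = (\<Sum>i\<in>UNIV. \<Sum>k\<in>UNIV. if E i k then (y $ i - y $ k)^2 else 0)"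

lemma dirichlet_form_pairs:
  "dirichlet_form E y = (\<Sum>(i, k)\<in>UNIV. if E i k then (y $ i - y $ k)^2 else 0)"
  unfolding dirichlet_form_def sum.cartesian_product UNIV_Times_UNIV by simp

text \<open>Cauchy--Schwarz along a shortest path; the path is injective, so each edge of it
  occurs (in both orientations) only once in the Dirichlet form.\<close>

lemma sq_diff_le_gdist_dirichlet_form:
  assumes sym: "\<And>i j. E i j \<Longrightarrow> E j i" and conn: "graph_connected E"
  shows "(y $ k - y $ l)^2 \<le> real (gdist E k l) * dirichlet_form E y / 2"
proof -
  let ?m = "gdist E k l"
  obtain p where p: "p 0 = k" "p ?m = l" "\<forall>i<?m. E (p i) (p (Suc i))" "inj_on p {0..?m}"
    using shortest_walk[OF conn] .
  define a where "a r = y $ p r - y $ p (Suc r)" for r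
  have "y $ k - y $ l = (\<Sum>r<?m. a r)"
    unfolding a_def using sum_lessThan_telescope'[of "\<lambda>r. y $ p r" ?m] p by simp
  then have "(y $ k - y $ l)^2 \<le> (\<Sum>r<?m. (a r)^2) * real ?m"
    using sum_squared_le_sum_of_squares[of a "{..<?m}"] by simp
  also have "(\<Sum>r<?m. (a r)^2) \<le> dirichlet_form E y / 2"
  proof -
    let ?g = "\<lambda>(i, k). if E i k then (y $ i - y $ k)^2 else (0::real)"
    define S1 where "S1 = (\<lambda>r. (p r, p (Suc r))) ` {..<?m}"
    define S2 where "S2 = (\<lambda>r. (p (Suc r), p r)) ` {..<?m}"
    have inj1: "inj_on (\<lambda>r. (p r, p (Suc r))) {..<?m}"
      and inj2: "inj_on (\<lambda>r. (p (Suc r), p r)) {..<?m}"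
      using p(4) by (auto simp: inj_on_def)
    have "S1 \<inter> S2 = {}"
    proof -
      have False if "r < ?m" "r' < ?m" "p r = p (Suc r')" "p (Suc r) = p r'" for r r'
      proof -
        have "r = Suc r'" "Suc r = r'" using that p(4) by (auto simp: inj_on_def)
        then show False by simp
      qed
      then show ?thesis unfolding S1_def S2_def by auto
    qed
    moreover have "sum ?g S1 = (\<Sum>r<?m. (a r)^2)"
      unfolding S1_def using inj1 p(3) by (simp add: sum.reindex a_def)
    moreover have "sum ?g S2 = (\<Sum>r<?m. (a r)^2)"
      unfolding S2_def using inj2 p(3) sym by (simp add: sum.reindex a_def power2_commute)
    moreover have "sum ?g (S1 \<union> S2) \<le> sum ?g UNIV"
      by (rule sum_mono2) auto
    ultimately have "2 * (\<Sum>r<?m. (a r)^2) \<le> dirichlet_form E y"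
      using sum.union_disjoint[of S1 S2 ?g] unfolding dirichlet_form_pairs
      by (simp add: S1_def S2_def)
    then show ?thesis by simp
  qed
  then have "(\<Sum>r<?m. (a r)^2) * real ?m \<le> dirichlet_form E y / 2 * real ?m"
    by (rule mult_right_mono) simp
  finally show ?thesis by (simp add: mult.commute)
qed

lemma Lconst_pos: "0 < Lconst E"
proof -
  have "0 \<le> (\<Sum>(k, l)\<in>{(k, l). k \<noteq> l \<and> \<not> E k l}. real (gdist E k l))"
    by (auto intro: sum_nonneg)
  then show ?thesis unfolding Lconst_def by (simp add: add_pos_nonneg)
qed

text \<open>For centred \<open>y\<close> the sum of all squared differences is \<open>2 n\<close> times the energy;
  its non-edge terms are bounded by the previous lemma.\<close>

lemma dirichlet_form_ge_Lconst_energy: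
  fixes y :: "real^'n::finite"
  assumes sym: "\<And>i j. E i j \<Longrightarrow> E j i" and conn: "graph_connected E"
    and centred: "(\<Sum>i\<in>UNIV. y $ i) = 0"
  shows "2 * real CARD('n) * Lconst E * energy y \<le> dirichlet_form E y"
proof -
  define NE where "NE = {(k, l). k \<noteq> l \<and> \<not> E k l}"
  define S where "S = (\<Sum>(k, l)\<in>NE. real (gdist E k l))"
  let ?h = "\<lambda>(i, j). (y $ i - y $ j)^2"
  let ?g = "\<lambda>(i, j). if E i j then (y $ i - y $ j)^2 else (0::real)"
  have "0 \<le> S" unfolding S_def by (auto intro: sum_nonneg)
  have split: "?h z = ?g z + (if z \<in> NE then ?h z else 0)" for z
    by (cases z) (auto simp: NE_def)
  have "(\<Sum>z\<in>UNIV. ?h z) = (\<Sum>z\<in>UNIV. ?g z) + (\<Sum>z\<in>NE. ?h z)"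
    by (subst split) (simp add: sum.distrib sum.inter_filter[symmetric])
  also have "(\<Sum>z\<in>NE. ?h z) \<le> (\<Sum>(k, l)\<in>NE. real (gdist E k l) * dirichlet_form E y / 2)"
    using sq_diff_le_gdist_dirichlet_form[OF sym conn, of y] by (intro sum_mono) auto
  also have "\<dots> = S * dirichlet_form E y / 2"
    unfolding S_def by (simp add: sum_distrib_right sum_divide_distrib case_prod_unfold)
  finally have "2 * real CARD('n) * energy y \<le> dirichlet_form E y * (1 + S / 2)"
    using sum_sq_diff_eq[of y] centred dirichlet_form_pairs[of E y]
    unfolding sum.cartesian_product UNIV_Times_UNIV by (simp add: algebra_simps)
  then have "2 * real CARD('n) * energy y / (1 + S / 2) \<le> dirichlet_form E y"
    using \<open>0 \<le> S\<close> by (simp add: divide_le_eq)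
  then show ?thesis unfolding Lconst_def S_def NE_def by simp
qed

section \<open>A barrier principle and Barbalat's lemma\<close>

lemma first_crossing:
  fixes h :: "'q::finite \<Rightarrow> real \<Rightarrow> real"
  assumes cont: "\<And>q. continuous_on {0..} (h q)" and start: "\<And>q. h q 0 < 0"
    and T: "0 \<le> T" "0 \<le> h q0 T"
  obtains s q where "0 < s" "h q s = 0" "\<And>q'. h q' s \<le> 0"
    "\<And>q' t. 0 \<le> t \<Longrightarrow> t < s \<Longrightarrow> h q' t < 0"
proof -
  define A where "A = (\<Union>q. {0..T} \<inter> h q -` {0..})"
  have "T \<in> A" using T unfolding A_def by auto
  have "closed A" unfolding A_def
    by (intro closed_UN ballI continuous_closed_preimage) (auto intro: continuous_on_subset[OF cont])
  moreover have bdd: "bdd_below A" unfolding A_def by (auto intro!: bdd_belowI[of _ 0])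
  ultimately have "Inf A \<in> A" using \<open>T \<in> A\<close> closed_contains_Inf by blast
  then obtain q where q: "0 \<le> h q (Inf A)" and s: "0 \<le> Inf A" unfolding A_def by auto
  have "Inf A \<le> T" using cInf_lower[OF \<open>T \<in> A\<close> bdd] .
  have before: "h q' t < 0" if "0 \<le> t" "t < Inf A" for q' t
  proof (rule ccontr)
    assume "\<not> h q' t < 0"
    then have "t \<in> {0..T} \<inter> h q' -` {0..}" using that \<open>Inf A \<le> T\<close> by auto
    then have "t \<in> A" unfolding A_def by blast
    then show False using cInf_lower[OF _ bdd] that by fastforce
  qed
  have "Inf A \<noteq> 0" using q start[of q] by auto
  with s have pos: "0 < Inf A" by simp
  have le: "h q' (Inf A) \<le> 0" for q'
  proof -
    have "continuous_on {0..Inf A} (h q')" using continuous_on_subset[OF cont] by auto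
    then have "((h q') \<longlongrightarrow> h q' (Inf A)) (at (Inf A) within {0..Inf A})"
      using s by (simp add: continuous_on_def)
    then have "((h q') \<longlongrightarrow> h q' (Inf A)) (at_left (Inf A))"
      by (simp add: at_within_Icc_at_left[OF pos])
    moreover have "eventually (\<lambda>t. h q' t \<le> 0) (at_left (Inf A))"
      using eventually_at_left_real[OF pos] by eventually_elim (auto intro: less_imp_le before)
    ultimately show ?thesis by (rule tendsto_upperbound) (simp add: trivial_limit_at_left_real)
  qed
  with q have "h q (Inf A) = 0" by (simp add: order_antisym)
  with pos le before that show ?thesis by blast
qed

text \<open>A comparison (barrier) principle: each \<open>f q\<close> is compared with
  \<open>1 + \<epsilon> e\<^sup>2\<^sup>C\<^sup>t\<close>; at the first time some \<open>f q\<close> touches this bound its growth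
  rate is at most \<open>C \<epsilon> e\<^sup>2\<^sup>C\<^sup>t\<close>, less than that of the bound.\<close>

lemma barrier_invariant:
  fixes f f' :: "'q::finite \<Rightarrow> real \<Rightarrow> real"
  assumes deriv: "\<And>q t. 0 \<le> t \<Longrightarrow> (f q has_real_derivative f' q t) (at t within {0..})"
    and start: "\<And>q. f q 0 \<le> 1" and C: "0 < C"
    and push: "\<And>q s v. 0 \<le> s \<Longrightarrow> 1 < v \<Longrightarrow> (\<And>q'. f q' s \<le> v) \<Longrightarrow> f q s = v \<Longrightarrow>
      f' q s \<le> C * (v - 1)"
    and T: "0 \<le> T"
  shows "f q0 T \<le> 1"
proof (rule ccontr)
  assume above: "\<not> ?thesis"
  define \<epsilon> where "\<epsilon> = (f q0 T - 1) / (2 * exp (2 * C * T))"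
  have eps: "0 < \<epsilon>" using above by (simp add: \<epsilon>_def)
  define h where "h q t = f q t - 1 - \<epsilon> * exp (2 * C * t)" for q t
  have hder: "(h q has_real_derivative f' q t - 2 * (C * (\<epsilon> * exp (2 * C * t)))) (at t within {0..})"
    if "0 \<le> t" for q t
    unfolding h_def using deriv[OF that] by (auto intro!: derivative_eq_intros simp: algebra_simps)
  have "continuous_on {0..} (h q)" for q
    using hder by (intro DERIV_continuous_on) auto
  moreover have "h q 0 < 0" for q
    using start[of q] eps by (simp add: h_def)
  moreover have "0 \<le> h q0 T"
    using above by (simp add: h_def \<epsilon>_def)
  ultimately obtain s q where s: "0 < s" "h q s = 0" "\<And>q'. h q' s \<le> 0"
    "\<And>q' t. 0 \<le> t \<Longrightarrow> t < s \<Longrightarrow> h q' t < 0"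
    using first_crossing T by blast
  have "2 * (C * (\<epsilon> * exp (2 * C * s))) \<le> f' q s"
  proof (rule ccontr)
    assume "\<not> ?thesis"
    then obtain d where "0 < d" and d: "\<And>\<eta>. 0 < \<eta> \<Longrightarrow> s - \<eta> \<in> {0..} \<Longrightarrow> \<eta> < d \<Longrightarrow> h q s < h q (s - \<eta>)"
      using has_real_derivative_neg_dec_left[OF hder[of s q]] s by auto
    define \<eta> where "\<eta> = min s d / 2"
    have "0 < \<eta>" "s - \<eta> \<in> {0..}" "\<eta> < d" "s - \<eta> < s"
      using \<open>0 < d\<close> s(1) by (auto simp: \<eta>_def)
    then have "h q s < h q (s - \<eta>)" "h q (s - \<eta>) < 0"
      using d s(4) by auto
    then show False using s(2) by simp
  qed
  moreover have "f' q s \<le> C * (\<epsilon> * exp (2 * C * s))"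
  proof -
    have below: "f q' s \<le> 1 + \<epsilon> * exp (2 * C * s)" for q'
      using s(3)[of q'] by (simp add: h_def)
    have "f q s = 1 + \<epsilon> * exp (2 * C * s)" using s(2) by (simp add: h_def)
    then show ?thesis using push[of s _ q, OF _ _ below] s(1) eps by simp
  qed
  moreover have "0 < C * (\<epsilon> * exp (2 * C * s))" using C eps by simp
  ultimately show False by linarith
qed

lemma unbounded_if_often_increments:
  fixes p :: "real \<Rightarrow> real"
  assumes mono: "\<And>a b. 1 \<le> a \<Longrightarrow> a \<le> b \<Longrightarrow> p a \<le> p b" and "0 \<le> \<delta>"
    and often: "\<And>T. \<exists>t\<ge>T. p t + d \<le> p (t + \<delta>)"
  shows "\<exists>t\<ge>1. p 1 + real N * d \<le> p t"
proof (induction N)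
  case (Suc N)
  then obtain t where t: "1 \<le> t" "p 1 + real N * d \<le> p t" by blast
  obtain t' where t': "t \<le> t'" "p t' + d \<le> p (t' + \<delta>)" using often by blast
  have "p t \<le> p t'" using mono t(1) t'(1) by blast
  moreover have "real (Suc N) * d = real N * d + d" by (simp add: algebra_simps)
  ultimately have "p 1 + real (Suc N) * d \<le> p (t' + \<delta>)" using t(2) t'(2) by linarith
  moreover have "1 \<le> t' + \<delta>" using t(1) t'(1) \<open>0 \<le> \<delta>\<close> by simp
  ultimately show ?case by blast
qed auto

lemma Lipschitz_deriv_increment:
  fixes p g :: "real \<Rightarrow> real"
  assumes deriv: "\<And>t. 0 < t \<Longrightarrow> (p has_real_derivative g t) (at t)"
    and lip: "\<And>a b. 0 < a \<Longrightarrow> a \<le> b \<Longrightarrow> \<bar>g b - g a\<bar> \<le> L * (b - a)"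
    and t: "0 < t" and \<delta>: "0 < \<delta>" "\<bar>L\<bar> * \<delta> \<le> c / 2" and c: "c \<le> g t"
  shows "p t + \<delta> * (c / 2) \<le> p (t + \<delta>)"
proof -
  obtain z where z: "t < z" "z < t + \<delta>" "p (t + \<delta>) - p t = \<delta> * g z"
    using MVT2[of t "t + \<delta>" p g] deriv t \<delta> by force
  have "\<bar>g z - g t\<bar> \<le> L * (z - t)" using lip t z by simp
  also have "\<dots> \<le> \<bar>L\<bar> * \<delta>"
    using z by (intro order_trans[OF abs_ge_self[THEN mult_right_mono] mult_left_mono]) auto
  finally have "c / 2 \<le> g z" using c \<delta> by linarith
  then have "\<delta> * (c / 2) \<le> \<delta> * g z" using \<delta> by (intro mult_left_mono) auto
  with z(3) show ?thesis by linarith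
qed

text \<open>A form of Barbalat's lemma.\<close>

lemma Lipschitz_nonneg_deriv_tendsto_0:
  fixes p g :: "real \<Rightarrow> real"
  assumes deriv: "\<And>t. 0 < t \<Longrightarrow> (p has_real_derivative g t) (at t)"
    and nonneg: "\<And>t. 0 < t \<Longrightarrow> 0 \<le> g t"
    and lip: "\<And>a b. 0 < a \<Longrightarrow> a \<le> b \<Longrightarrow> \<bar>g b - g a\<bar> \<le> L * (b - a)"
    and bdd: "\<And>t. 0 < t \<Longrightarrow> p t \<le> M"
  shows "(g \<longlongrightarrow> 0) at_top"
proof (rule order_tendstoI)
  fix c :: real assume "0 < c"
  have mono: "p a \<le> p b" if "0 < a" "a \<le> b" for a b
  proof (rule DERIV_nonneg_imp_nondecreasing[OF \<open>a \<le> b\<close>])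
    fix x assume "a \<le> x" "x \<le> b"
    then have "0 < x" using that by simp
    then show "\<exists>y. DERIV p x :> y \<and> 0 \<le> y" using deriv nonneg by blast
  qed
  define \<delta> where "\<delta> = c / (2 * (1 + \<bar>L\<bar>))"
  have "0 < \<delta>" using \<open>0 < c\<close> by (simp add: \<delta>_def add_pos_nonneg)
  have "\<bar>L\<bar> * \<delta> \<le> (1 + \<bar>L\<bar>) * \<delta>" using \<open>0 < \<delta>\<close> by (intro mult_right_mono) auto
  also have "\<dots> = c / 2"
    using abs_add_one_gt_zero[of L] unfolding \<delta>_def by (simp add: field_simps)
  finally have L\<delta>: "\<bar>L\<bar> * \<delta> \<le> c / 2" .
  note step = Lipschitz_deriv_increment[OF deriv lip _ \<open>0 < \<delta>\<close> L\<delta>]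
  show "eventually (\<lambda>t. g t < c) at_top"
  proof (rule ccontr)
    assume "\<not> ?thesis"
    then have large: "\<forall>T. \<exists>t\<ge>T. c \<le> g t"
      by (auto simp: eventually_at_top_linorder not_less)
    have often: "\<exists>t\<ge>T. p t + \<delta> * (c / 2) \<le> p (t + \<delta>)" for T
    proof -
      obtain t where "max T 1 \<le> t" "c \<le> g t" using large by blast
      then show ?thesis using step[of t] by (intro exI[of _ t]) auto
    qed
    obtain N where "(M - p 1) / (\<delta> * (c / 2)) < real N" using reals_Archimedean2 by blast
    then have "M - p 1 < real N * (\<delta> * (c / 2))"
      using \<open>0 < \<delta>\<close> \<open>0 < c\<close> by (simp add: divide_less_eq)
    moreover obtain t where "1 \<le> t" "p 1 + real N * (\<delta> * (c / 2)) \<le> p t"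
    proof -
      have "p a \<le> p b" if "1 \<le> a" "a \<le> b" for a b using mono that by simp
      then show ?thesis
        using unbounded_if_often_increments[of p \<delta>, OF _ _ often] \<open>0 < \<delta>\<close> that by fastforce
    qed
    ultimately have "M < p t" by linarith
    then show False using bdd[of t] \<open>1 \<le> t\<close> by simp
  qed
next
  fix c :: real assume "c < 0"
  show "eventually (\<lambda>t. c < g t) at_top"
    using eventually_gt_at_top[of 0]
  proof eventually_elim
    case (elim t)
    with nonneg[of t] \<open>c < 0\<close> show ?case by linarith
  qed
qed

lemma near_zeros_if_tendsto_0:
  fixes f :: "'a::metric_space \<Rightarrow> 'b::real_normed_vector"
  assumes "compact S" "continuous_on S f" "eventually (\<lambda>t. x t \<in> S) F"
    "((\<lambda>t. f (x t)) \<longlongrightarrow> 0) F" "0 < \<epsilon>"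
  shows "eventually (\<lambda>t. \<exists>y. f y = 0 \<and> dist (x t) y < \<epsilon>) F"
proof -
  define B where "B = S \<inter> (\<Inter>y\<in>{y. f y = 0}. {z. \<epsilon> \<le> dist z y})"
  have "eventually (\<lambda>t. x t \<notin> B) F"
  proof (cases "B = {}")
    case False
    have "compact B" unfolding B_def
      by (intro compact_Int_closed closed_INT ballI closed_Collect_le continuous_intros assms(1))
    moreover have "continuous_on B (\<lambda>z. norm (f z))"
      using assms(2) by (auto simp: B_def intro: continuous_on_norm continuous_on_subset)
    ultimately obtain z0 where z0: "z0 \<in> B" "\<And>z. z \<in> B \<Longrightarrow> norm (f z0) \<le> norm (f z)"
      using continuous_attains_inf[OF _ False] by blast
    have "f z0 \<noteq> 0" using z0(1) \<open>0 < \<epsilon>\<close> unfolding B_def by force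
    then have "eventually (\<lambda>t. norm (f (x t)) < norm (f z0)) F"
      using assms(4) by (auto simp: tendsto_iff dist_norm)
    then show ?thesis by eventually_elim (use z0(2) in force)
  qed simp
  with assms(3) show ?thesis
    by eventually_elim (auto simp: B_def not_le)
qed

section \<open>The Kuramoto field\<close>

locale kuramoto =
  fixes E :: "'n::finite \<Rightarrow> 'n \<Rightarrow> bool" and K :: real and w :: "real^'n"
  assumes E_sym: "\<And>i j. E i j \<Longrightarrow> E j i"
    and conn: "graph_connected E"
    and K_pos: "0 < K"
    and w_sum: "(\<Sum>i\<in>UNIV. w $ i) = 0"
begin

abbreviation F :: "real^'n \<Rightarrow> real^'n" where
  "F \<equiv> kuramoto_field E K w"

lemma field_nth:
  "F x $ i = w $ i + K / real CARD('n) * (\<Sum>k\<in>UNIV. if E i k then sin (x $ k - x $ i) else 0)"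
  by (simp add: kuramoto_field_def sum.inter_filter[of UNIV, simplified])

lemma sum_field: "(\<Sum>i\<in>UNIV. F x $ i) = 0"
proof -
  have "(\<Sum>i\<in>UNIV. \<Sum>k\<in>UNIV. if E i k then sin (x $ k - x $ i) else 0) = 0"
  proof (rule sum_edges_antisym[of E, OF E_sym])
    fix i k
    show "sin (x $ i - x $ k) = - sin (x $ k - x $ i)" by (metis minus_diff_eq sin_minus)
  qed
  then show ?thesis
    by (simp add: field_nth sum.distrib w_sum sum_distrib_left[symmetric]
        sum_divide_distrib[symmetric])
qed

lemma norm_field_power2: "(norm (F x))^2 = (\<Sum>i\<in>UNIV. (F x $ i)^2)"
  unfolding power2_norm_eq_inner by (simp add: inner_vec_def power2_eq_square)

lemma continuous_on_field: "continuous_on S F"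
  unfolding kuramoto_field_def by (intro continuous_intros)

lemma field_diff_abs_le:
  assumes "\<forall>j. \<bar>x $ j - y $ j\<bar> \<le> \<delta>"
  shows "\<bar>F x $ i - F y $ i\<bar> \<le> 2 * K * \<delta>"
proof -
  let ?d = "\<lambda>k. if E i k then sin (x $ k - x $ i) - sin (y $ k - y $ i) else 0"
  have "\<bar>?d k\<bar> \<le> 2 * \<delta>" for k
  proof -
    have "\<bar>sin (x $ k - x $ i) - sin (y $ k - y $ i)\<bar> \<le> \<bar>(x $ k - y $ k) - (x $ i - y $ i)\<bar>"
      using abs_sin_diff_le[of "x $ k - x $ i" "y $ k - y $ i"] by (simp add: algebra_simps)
    also have "\<dots> \<le> 2 * \<delta>" using assms[rule_format, of k] assms[rule_format, of i] by linarith
    finally show ?thesis using assms[rule_format, of i] by auto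
  qed
  then have "\<bar>\<Sum>k\<in>UNIV. ?d k\<bar> \<le> real CARD('n) * (2 * \<delta>)"
    using order.trans[OF sum_abs sum_mono[of UNIV "\<lambda>k. \<bar>?d k\<bar>" "\<lambda>_. 2 * \<delta>"]] by simp
  moreover have eq: "F x $ i - F y $ i = K / real CARD('n) * (\<Sum>k\<in>UNIV. ?d k)"
  proof -
    have "(\<Sum>k\<in>UNIV. ?d k) = (\<Sum>k\<in>UNIV. if E i k then sin (x $ k - x $ i) else 0)
        - (\<Sum>k\<in>UNIV. if E i k then sin (y $ k - y $ i) else 0)"
      by (simp add: sum_subtractf[symmetric] if_distrib cong: if_cong)
    then show ?thesis by (simp add: field_nth right_diff_distrib)
  qed
  moreover have Kn: "0 < K / real CARD('n)" using K_pos by simp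
  ultimately have "\<bar>F x $ i - F y $ i\<bar> \<le> K / real CARD('n) * (real CARD('n) * (2 * \<delta>))"
    unfolding eq abs_mult abs_of_pos[OF Kn] by (intro mult_left_mono) auto
  then show ?thesis by simp
qed

definition field_bound :: real where
  "field_bound = (\<Sum>j\<in>UNIV. \<bar>w $ j\<bar>) + K"

lemma field_abs_le: "\<bar>F x $ i\<bar> \<le> field_bound"
proof -
  let ?s = "\<Sum>k\<in>UNIV. if E i k then sin (x $ k - x $ i) else 0"
  have "\<bar>?s\<bar> \<le> (\<Sum>k\<in>(UNIV::'n set). 1)"
    by (rule order.trans[OF sum_abs], rule sum_mono) auto
  then have "\<bar>?s\<bar> \<le> real CARD('n)" by simp
  then have "\<bar>K / real CARD('n) * ?s\<bar> \<le> K"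
    using K_pos by (simp add: abs_mult field_simps)
  moreover have "\<bar>w $ i\<bar> \<le> (\<Sum>j\<in>UNIV. \<bar>w $ j\<bar>)" by (rule member_le_sum) auto
  moreover have "\<bar>F x $ i\<bar> \<le> \<bar>w $ i\<bar> + \<bar>K / real CARD('n) * ?s\<bar>"
    unfolding field_nth by (rule abs_triangle_ineq)
  ultimately show ?thesis unfolding field_bound_def by linarith
qed

lemma norm_field_power2_diff_le:
  assumes "\<forall>j. \<bar>x $ j - y $ j\<bar> \<le> \<delta>"
  shows "\<bar>(norm (F x))^2 - (norm (F y))^2\<bar> \<le> real CARD('n) * (4 * K * field_bound * \<delta>)"
proof -
  have "0 \<le> \<delta>" using assms abs_ge_zero order_trans by blast
  have "(norm (F x))^2 - (norm (F y))^2 = (\<Sum>i\<in>UNIV. (F x $ i - F y $ i) * (F x $ i + F y $ i))"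
    unfolding norm_field_power2 by (simp add: sum_subtractf[symmetric] power2_eq_square algebra_simps)
  also have "\<bar>\<dots>\<bar> \<le> (\<Sum>i\<in>(UNIV::'n set). 4 * K * field_bound * \<delta>)"
  proof (rule order.trans[OF sum_abs sum_mono])
    fix i
    have "\<bar>F x $ i + F y $ i\<bar> \<le> 2 * field_bound"
      using field_abs_le[of x i] field_abs_le[of y i] by linarith
    then have "\<bar>F x $ i - F y $ i\<bar> * \<bar>F x $ i + F y $ i\<bar> \<le> (2 * K * \<delta>) * (2 * field_bound)"
      using field_diff_abs_le[OF assms] \<open>0 \<le> \<delta>\<close> K_pos by (intro mult_mono) auto
    then show "\<bar>(F x $ i - F y $ i) * (F x $ i + F y $ i)\<bar> \<le> 4 * K * field_bound * \<delta>"
      by (simp add: abs_mult mult_ac)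
  qed
  finally show ?thesis by simp
qed

lemma field_diff_objective:
  "F y $ k - F y $ l = w $ k - w $ l - K / real CARD('n) * objective E k l y"
proof -
  have "sin (y $ i - y $ k) = - sin (y $ k - y $ i)" for i
    by (metis minus_diff_eq sin_minus)
  then have "(\<Sum>i\<in>{i. E k i}. sin (y $ i - y $ k)) = - (\<Sum>i\<in>{i. E k i}. sin (y $ k - y $ i))"
    by (simp add: sum_negf)
  then show ?thesis
    unfolding kuramoto_field_def objective_def by (simp add: algebra_simps)
qed

text \<open>The coupling pushes a centred configuration of diameter at most \<open>D < \<pi>\<close> towards the
  origin at a rate proportional to its energy (Poincare inequality plus
  \<open>a sin a \<ge> (sin D / D) a\<^sup>2\<close>), against the forcing \<open>\<langle>y, w\<rangle> \<le> \<surd>energy y \<cdot> \<sigma>(w)\<close>.\<close>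

lemma sum_mult_field_le:
  assumes centred: "(\<Sum>i\<in>UNIV. y $ i) = 0" and diam: "\<forall>a b. \<bar>y $ a - y $ b\<bar> \<le> D"
    and D: "D < pi"
  shows "(\<Sum>i\<in>UNIV. y $ i * F y $ i)
    \<le> sqrt (energy y) * sigma w - K * Lconst E * (sin D / D) * energy y"
proof -
  define T where "T = (\<Sum>i\<in>UNIV. \<Sum>k\<in>UNIV. if E i k then y $ i * sin (y $ k - y $ i) else 0)"
  define U where "U = (\<Sum>i\<in>UNIV. \<Sum>k\<in>UNIV. if E i k then (y $ i - y $ k) * sin (y $ i - y $ k) else 0)"
  have split: "(\<Sum>i\<in>UNIV. y $ i * F y $ i) = (\<Sum>i\<in>UNIV. y $ i * w $ i) + K / real CARD('n) * T"
    unfolding field_nth T_def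
    by (simp add: algebra_simps sum.distrib sum_distrib_left sum_divide_distrib if_distrib cong: if_cong)
  have "(\<Sum>i\<in>UNIV. y $ i * w $ i) \<le> (\<Sum>i\<in>UNIV. \<bar>y $ i\<bar> * \<bar>w $ i\<bar>)"
    by (rule sum_mono) (simp add: abs_mult[symmetric])
  also have "\<dots> \<le> L2_set (\<lambda>i. y $ i) UNIV * L2_set (\<lambda>i. w $ i) UNIV"
    by (rule L2_set_mult_ineq)
  also have "\<dots> = sqrt (energy y) * sigma w"
    unfolding L2_set_def sigma_def energy_def by simp
  finally have yw: "(\<Sum>i\<in>UNIV. y $ i * w $ i) \<le> sqrt (energy y) * sigma w" .
  have "2 * T = T + (\<Sum>i\<in>UNIV. \<Sum>k\<in>UNIV. if E i k then y $ k * sin (y $ i - y $ k) else 0)"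
    unfolding T_def using sum_edges_swap[of E "\<lambda>i k. y $ i * sin (y $ k - y $ i)", OF E_sym] by simp
  also have "\<dots> = - U"
  proof -
    have "y $ i * sin (y $ k - y $ i) + y $ k * sin (y $ i - y $ k)
        = - ((y $ i - y $ k) * sin (y $ i - y $ k))" for i k
      using sin_minus[of "y $ i - y $ k"] by (simp add: algebra_simps)
    then show ?thesis unfolding T_def U_def
      by (simp add: sum.distrib[symmetric] sum_negf[symmetric] if_distrib cong: if_cong)
  qed
  finally have TU: "2 * T = - U" .
  have "0 \<le> D" using diam by force
  have "0 \<le> sin D / D"
    using sin_ge_zero[of D] \<open>0 \<le> D\<close> D by (simp add: zero_le_divide_iff)
  have "2 * real CARD('n) * Lconst E * energy y \<le> dirichlet_form E y"
    by (rule dirichlet_form_ge_Lconst_energy[OF _ conn centred]) (erule E_sym)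
  then have "sin D / D * (2 * real CARD('n) * Lconst E * energy y) \<le> sin D / D * dirichlet_form E y"
    using \<open>0 \<le> sin D / D\<close> by (rule mult_left_mono)
  also have "\<dots> \<le> U"
    unfolding dirichlet_form_def U_def sum_distrib_left
    using diam D mult_sin_ge_chord_square[of _ D] by (intro sum_mono) auto
  finally have "T \<le> - real CARD('n) * Lconst E * (sin D / D) * energy y"
    using TU by (simp add: algebra_simps)
  then have "K / real CARD('n) * T \<le> K / real CARD('n) * (- real CARD('n) * Lconst E * (sin D / D) * energy y)"
    using K_pos by (intro mult_left_mono) auto
  then show ?thesis using split yw by simp
qed

definition potential :: "real^'n \<Rightarrow> real" where
  "potential x = (\<Sum>i\<in>UNIV. w $ i * x $ i)
     + K / (2 * real CARD('n)) * (\<Sum>i\<in>UNIV. \<Sum>k\<in>UNIV. if E i k then cos (x $ k - x $ i) else 0)"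

text \<open>The Kuramoto field is the gradient of the potential.\<close>

lemma potential_gradient_field:
  "(\<Sum>i\<in>UNIV. w $ i * F x $ i) + K / (2 * real CARD('n)) *
     (\<Sum>i\<in>UNIV. \<Sum>k\<in>UNIV. if E i k then - sin (x $ k - x $ i) * (F x $ k - F x $ i) else 0)
   = (norm (F x))^2"
proof -
  define T where "T = (\<Sum>i\<in>UNIV. \<Sum>k\<in>UNIV. if E i k then sin (x $ k - x $ i) * F x $ i else 0)"
  have "(\<Sum>i\<in>UNIV. \<Sum>k\<in>UNIV. if E i k then sin (x $ k - x $ i) * F x $ k else 0)
      = (\<Sum>i\<in>UNIV. \<Sum>k\<in>UNIV. if E i k then sin (x $ i - x $ k) * F x $ i else 0)"
    using sum_edges_swap[of E "\<lambda>i k. sin (x $ k - x $ i) * F x $ k", OF E_sym] by simp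
  also have "\<dots> = - T"
  proof -
    have "(if E i k then sin (x $ i - x $ k) * F x $ i else 0)
        = - (if E i k then sin (x $ k - x $ i) * F x $ i else 0)" for i k
      using sin_minus[of "x $ k - x $ i"] by simp
    then show ?thesis unfolding T_def by (simp add: sum_negf)
  qed
  finally have swap: "(\<Sum>i\<in>UNIV. \<Sum>k\<in>UNIV. if E i k then sin (x $ k - x $ i) * F x $ k else 0) = - T" .
  have "(\<Sum>i\<in>UNIV. \<Sum>k\<in>UNIV. if E i k then - sin (x $ k - x $ i) * (F x $ k - F x $ i) else 0)
      = T - (\<Sum>i\<in>UNIV. \<Sum>k\<in>UNIV. if E i k then sin (x $ k - x $ i) * F x $ k else 0)"
    unfolding T_def by (simp add: sum_subtractf[symmetric] algebra_simps if_distrib cong: if_cong)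
  with swap have coupling: "(\<Sum>i\<in>UNIV. \<Sum>k\<in>UNIV. if E i k then - sin (x $ k - x $ i) * (F x $ k - F x $ i) else 0)
      = 2 * T" by simp
  have "(norm (F x))^2 = (\<Sum>i\<in>UNIV. F x $ i *
      (w $ i + K / real CARD('n) * (\<Sum>k\<in>UNIV. if E i k then sin (x $ k - x $ i) else 0)))"
    unfolding norm_field_power2 unfolding power2_eq_square by (simp only: field_nth[symmetric])
  also have "\<dots> = (\<Sum>i\<in>UNIV. w $ i * F x $ i) + K / real CARD('n) * T"
    unfolding T_def
    by (simp add: algebra_simps sum.distrib sum_distrib_left sum_divide_distrib if_distrib cong: if_cong)
  finally have norm_eq: "(norm (F x))^2 = (\<Sum>i\<in>UNIV. w $ i * F x $ i) + K / real CARD('n) * T" .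
  have "K / (2 * real CARD('n)) * (2 * T) = K / real CARD('n) * T" by simp
  then show ?thesis unfolding coupling norm_eq by (simp only:)
qed

lemma has_real_derivative_potential:
  assumes "(x has_vector_derivative F (x t)) (at t within S)"
  shows "((\<lambda>t. potential (x t)) has_real_derivative (norm (F (x t)))^2) (at t within S)"
proof -
  note nth = has_real_derivative_vec_nth[OF assms]
  have coupling: "((\<lambda>t. if E i k then cos (x t $ k - x t $ i) else 0) has_real_derivative
      (if E i k then - sin (x t $ k - x t $ i) * (F (x t) $ k - F (x t) $ i) else 0)) (at t within S)"
    for i k
    using nth[of k] nth[of i] by (cases "E i k") (auto intro!: derivative_eq_intros)
  have "((\<lambda>t. potential (x t)) has_real_derivative
      (\<Sum>i\<in>UNIV. w $ i * F (x t) $ i) + K / (2 * real CARD('n)) *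
      (\<Sum>i\<in>UNIV. \<Sum>k\<in>UNIV. if E i k then - sin (x t $ k - x t $ i) * (F (x t) $ k - F (x t) $ i) else 0))
      (at t within S)"
    unfolding potential_def
    by (intro DERIV_add DERIV_cmult DERIV_sum nth coupling)
  then show ?thesis by (simp only: potential_gradient_field)
qed

lemma potential_le: "potential x \<le> (\<Sum>i\<in>UNIV. \<bar>w $ i\<bar>) * sqrt (energy x) + K * real CARD('n) / 2"
proof -
  have "(\<Sum>i\<in>UNIV. w $ i * x $ i) \<le> (\<Sum>i\<in>UNIV. \<bar>w $ i\<bar> * sqrt (energy x))"
  proof (rule sum_mono)
    fix i
    have "w $ i * x $ i \<le> \<bar>w $ i\<bar> * \<bar>x $ i\<bar>" by (simp add: abs_mult[symmetric])
    also have "\<dots> \<le> \<bar>w $ i\<bar> * sqrt (energy x)"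
      using abs_nth_le_sqrt_energy by (intro mult_left_mono) auto
    finally show "w $ i * x $ i \<le> \<bar>w $ i\<bar> * sqrt (energy x)" .
  qed
  moreover have "(\<Sum>i\<in>UNIV. \<Sum>k\<in>UNIV. if E i k then cos (x $ k - x $ i) else 0)
      \<le> (\<Sum>i\<in>(UNIV::'n set). \<Sum>k\<in>(UNIV::'n set). 1)"
    by (intro sum_mono) auto
  then have "(\<Sum>i\<in>UNIV. \<Sum>k\<in>UNIV. if E i k then cos (x $ k - x $ i) else 0)
      \<le> real CARD('n) * real CARD('n)" by simp
  then have "K / (2 * real CARD('n)) * (\<Sum>i\<in>UNIV. \<Sum>k\<in>UNIV. if E i k then cos (x $ k - x $ i) else 0)
      \<le> K / (2 * real CARD('n)) * (real CARD('n) * real CARD('n))"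
    using K_pos by (intro mult_left_mono) auto
  ultimately show ?thesis unfolding potential_def by (simp add: sum_distrib_right[symmetric])
qed

end

locale kuramoto_solution = kuramoto E K w
  for E :: "'n::finite \<Rightarrow> 'n \<Rightarrow> bool" and K :: real and w :: "real^'n" +
  fixes D :: real and phi :: "real \<Rightarrow> real^'n"
  assumes irrefl: "\<And>i. \<not> E i i"
    and ode: "\<And>t. t \<ge> 0 \<Longrightarrow> (phi has_vector_derivative F (phi t)) (at t within {0..})"
    and init_sum: "(\<Sum>i\<in>UNIV. phi 0 $ i) = 0"
    and D0_pos: "0 < spread (phi 0)"
    and D0_le: "spread (phi 0) \<le> D"
    and D_lt: "D < pi"
    and E0_lt: "energy (phi 0) < D^2"
    and K_ge_Kstar: "\<And>k l. k \<noteq> l \<Longrightarrow> feasible D (energy (phi 0)) k l \<noteq> {} \<Longrightarrow>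
       K \<ge> Kstar_kl E w D (energy (phi 0)) k l"
    and K_ge2: "K \<ge> sigma w * D / (sqrt (energy (phi 0)) * Lconst E * sin D)"
begin

abbreviation E0 :: real where
  "E0 \<equiv> energy (phi 0)"

lemma E0_pos: "0 < E0"
proof -
  have "phi 0 \<noteq> 0" using D0_pos by (auto simp: spread_def)
  then show ?thesis by (simp add: energy_eq_norm_power2)
qed

lemma D_pos: "0 < D"
  using D0_pos D0_le by linarith

lemma sin_D_pos: "0 < sin D"
  using D_pos D_lt by (intro sin_gt_zero) auto

lemma has_real_derivative_phase:
  "0 \<le> t \<Longrightarrow> ((\<lambda>t. phi t $ i) has_real_derivative F (phi t) $ i) (at t within {0..})"
  using has_real_derivative_vec_nth ode by blast

lemma sum_phases: assumes "0 \<le> t" shows "(\<Sum>i\<in>UNIV. phi t $ i) = 0"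
proof -
  have "((\<lambda>t. \<Sum>i\<in>UNIV. phi t $ i) has_real_derivative 0) (at s within {0..})" if "s \<in> {0..}" for s
  proof -
    have "((\<lambda>t. \<Sum>i\<in>UNIV. phi t $ i) has_real_derivative (\<Sum>i\<in>UNIV. F (phi s) $ i)) (at s within {0..})"
      using that by (intro DERIV_sum has_real_derivative_phase) auto
    then show ?thesis by (simp add: sum_field)
  qed
  then obtain c where "\<forall>s\<in>{0..}. (\<Sum>i\<in>UNIV. phi s $ i) = c"
    using has_field_derivative_zero_constant[of "{0::real..}"] by blast
  then show ?thesis using assms init_sum by force
qed

lemma objective_pos:
  assumes kl: "k \<noteq> l" and y: "y \<in> feasible D E0 k l"
  shows "0 < objective E k l y"
proof -
  have yk: "y $ k = y $ l + D" and ey: "energy y \<le> E0" and rng: "\<And>m. y $ l \<le> y $ m \<and> y $ m \<le> y $ k"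
    using y unfolding feasible_def energy_def by auto
  have in_range: "0 \<le> y $ k - y $ m" "y $ k - y $ m < pi" "0 \<le> y $ m - y $ l" "y $ m - y $ l < pi" for m
    using rng[of m] yk D_lt by auto
  have t1: "0 \<le> sin (y $ k - y $ i)" and t2: "0 \<le> sin (y $ i - y $ l)" for i
    using in_range[of i] by (simp_all add: sin_ge_zero)
  show ?thesis
  proof (rule ccontr)
    assume "\<not> ?thesis"
    moreover have "0 \<le> (\<Sum>i\<in>{i. E k i}. sin (y $ k - y $ i))" "0 \<le> (\<Sum>j\<in>{j. E l j}. sin (y $ j - y $ l))"
      using t1 t2 by (auto intro: sum_nonneg)
    ultimately have z1: "(\<Sum>i\<in>{i. E k i}. sin (y $ k - y $ i)) = 0"
      and z2: "(\<Sum>j\<in>{j. E l j}. sin (y $ j - y $ l)) = 0"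
      unfolding objective_def by auto
    obtain a where a: "E k a" using graph_connected_has_neighbour[OF conn kl] .
    have "l \<noteq> k" using kl by simp
    then obtain b where b: "E l b" using graph_connected_has_neighbour[OF conn] by blast
    have "sin (y $ k - y $ a) = 0" using z1 t1 a by (subst (asm) sum_nonneg_eq_0_iff) auto
    then have ya: "y $ a = y $ k" using sin_gt_zero[of "y $ k - y $ a"] in_range[of a] by force
    have "sin (y $ b - y $ l) = 0" using z2 t2 b by (subst (asm) sum_nonneg_eq_0_iff) auto
    then have yb: "y $ b = y $ l" using sin_gt_zero[of "y $ b - y $ l"] in_range[of b] by force
    have "a \<noteq> k" "b \<noteq> l" "a \<noteq> l" "b \<noteq> k" "a \<noteq> b"
      using a b irrefl ya yb yk D_pos by auto
    then have "(\<Sum>m\<in>{k, a, l, b}. (y $ m)^2) = 2 * (y $ k)^2 + 2 * (y $ l)^2"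
      using kl ya yb by simp
    moreover have "(\<Sum>m\<in>{k, a, l, b}. (y $ m)^2) \<le> energy y"
      unfolding energy_def by (rule sum_mono2) auto
    moreover have "D^2 \<le> 2 * (y $ k)^2 + 2 * (y $ l)^2"
    proof -
      have "2 * (y $ k)^2 + 2 * (y $ l)^2 - D^2 = (y $ k + y $ l)^2"
        using yk by (simp add: power2_eq_square algebra_simps)
      then show ?thesis by (smt (verit) zero_le_power2)
    qed
    ultimately show False using ey E0_lt by linarith
  qed
qed

lemma mkl_pos_le_objective:
  assumes kl: "k \<noteq> l" and y: "y \<in> feasible D E0 k l"
  shows "0 < mkl E D E0 k l" "mkl E D E0 k l \<le> objective E k l y"
proof -
  have "continuous_on (feasible D E0 k l) (objective E k l)"
    unfolding objective_def by (intro continuous_intros)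
  then obtain y0 where y0: "y0 \<in> feasible D E0 k l"
    "\<And>y. y \<in> feasible D E0 k l \<Longrightarrow> objective E k l y0 \<le> objective E k l y"
    using continuous_attains_inf[OF compact_feasible] y by blast
  then have "mkl E D E0 k l = objective E k l y0"
    unfolding mkl_def by (intro cInf_eq_minimum) auto
  then show "0 < mkl E D E0 k l" "mkl E D E0 k l \<le> objective E k l y"
    using objective_pos[OF kl y0(1)] y0(2)[OF y] by simp_all
qed

text \<open>On the face \<open>y\<^sub>k - y\<^sub>l = D\<close> of the region, \<open>K \<ge> K\<^sup>*\<^sub>k\<^sub>l\<close> means that the coupling
  beats the frequency difference, so the pair does not separate further.\<close>

lemma field_diff_nonpos_on_face:
  assumes kl: "k \<noteq> l" and y: "y \<in> feasible D E0 k l"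
  shows "F y $ k - F y $ l \<le> 0"
proof -
  note m = mkl_pos_le_objective[OF kl y]
  have "Kstar_kl E w D E0 k l \<le> K" using K_ge_Kstar[OF kl] y by blast
  then have "real CARD('n) * \<bar>w $ k - w $ l\<bar> \<le> K * mkl E D E0 k l"
    unfolding Kstar_kl_def using m(1) by (simp add: divide_le_eq)
  also have "\<dots> \<le> K * objective E k l y"
    using m(2) K_pos by (intro mult_left_mono) auto
  finally have "\<bar>w $ k - w $ l\<bar> \<le> K / real CARD('n) * objective E k l y"
    by (simp add: field_simps)
  then show ?thesis using field_diff_objective[of y k l] by linarith
qed

text \<open>On the sphere \<open>energy y = E0\<close> of the region, the second condition on \<open>K\<close> makes the
  energy non-increasing.\<close>

lemma sum_mult_field_nonpos_on_sphere:
  assumes centred: "(\<Sum>i\<in>UNIV. y $ i) = 0" and ey: "energy y = E0"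
    and diam: "\<forall>a b. \<bar>y $ a - y $ b\<bar> \<le> D"
  shows "(\<Sum>i\<in>UNIV. y $ i * F y $ i) \<le> 0"
proof -
  have "sigma w * D \<le> K * (sqrt E0 * Lconst E * sin D)"
    using K_ge2 E0_pos Lconst_pos[of E] sin_D_pos by (simp add: divide_le_eq)
  then have "sigma w * D * sqrt E0 \<le> K * (sqrt E0 * Lconst E * sin D) * sqrt E0"
    using E0_pos by (intro mult_right_mono) auto
  then have "sqrt E0 * sigma w \<le> K * Lconst E * (sin D / D) * E0"
    using E0_pos D_pos by (simp add: field_simps)
  then show ?thesis using sum_mult_field_le[OF centred diam D_lt] ey by simp
qed


subsection \<open>Positive invariance\<close>

definition barrier :: "('n \<times> 'n) option \<Rightarrow> real^'n \<Rightarrow> real" where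
  "barrier q x = (case q of None \<Rightarrow> energy x / E0 | Some (k, l) \<Rightarrow> (x $ k - x $ l)^2 / D^2)"

definition barrier_rate :: "('n \<times> 'n) option \<Rightarrow> real^'n \<Rightarrow> real" where
  "barrier_rate q x = (case q of
      None \<Rightarrow> (\<Sum>i\<in>UNIV. 2 * x $ i * F x $ i) / E0
    | Some (k, l) \<Rightarrow> 2 * (x $ k - x $ l) * (F x $ k - F x $ l) / D^2)"

lemma has_real_derivative_barrier:
  assumes "0 \<le> t"
  shows "((\<lambda>t. barrier q (phi t)) has_real_derivative barrier_rate q (phi t)) (at t within {0..})"
proof (cases q)
  case None
  have "((\<lambda>t. (\<Sum>i\<in>UNIV. (phi t $ i)^2) / E0) has_real_derivative
      (\<Sum>i\<in>UNIV. 2 * phi t $ i * F (phi t) $ i) / E0) (at t within {0..})"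
    using has_real_derivative_phase[OF assms] E0_pos
    by (auto intro!: derivative_eq_intros DERIV_sum simp: mult_ac)
  then show ?thesis using None by (simp add: barrier_def barrier_rate_def energy_def)
next
  case (Some kl)
  then obtain k l where kl: "q = Some (k, l)" by fastforce
  have "((\<lambda>t. (phi t $ k - phi t $ l)^2) has_real_derivative
      2 * (phi t $ k - phi t $ l) * (F (phi t) $ k - F (phi t) $ l)) (at t within {0..})"
    using has_real_derivative_phase[OF assms]
    by (auto intro!: derivative_eq_intros simp: mult_ac)
  then have "((\<lambda>t. (phi t $ k - phi t $ l)^2 / D^2) has_real_derivative
      2 * (phi t $ k - phi t $ l) * (F (phi t) $ k - F (phi t) $ l) / D^2) (at t within {0..})"
    by (rule DERIV_cdivide)
  then show ?thesis using kl by (simp add: barrier_def barrier_rate_def)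
qed

lemma barrier_scaleR: "barrier q (c *\<^sub>R x) = c^2 * barrier q x"
  by (cases q) (auto simp: barrier_def energy_def power_mult_distrib sum_distrib_left
      right_diff_distrib[symmetric])

lemma barriers_le_1_iff: "(\<forall>q. barrier q x \<le> 1) \<longleftrightarrow> energy x \<le> E0 \<and> spread x \<le> D"
proof -
  have none: "barrier None x \<le> 1 \<longleftrightarrow> energy x \<le> E0"
    using E0_pos by (simp add: barrier_def)
  have some: "barrier (Some (a, b)) x \<le> 1 \<longleftrightarrow> \<bar>x $ a - x $ b\<bar> \<le> D" for a b
    using D_pos by (simp add: barrier_def abs_le_square_iff[symmetric])
  have "(\<forall>q. barrier q x \<le> 1) \<longleftrightarrow> barrier None x \<le> 1 \<and> (\<forall>a b. barrier (Some (a, b)) x \<le> 1)"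
    by (metis option.exhaust surj_pair)
  then show ?thesis by (simp only: none some spread_le_iff)
qed

text \<open>Rescaling a centred point whose barriers are all at most \<open>v\<close> by \<open>1 / \<surd>v\<close> lands
  in the region where the two conditions on \<open>K\<close> apply, and moves the field by
  \<open>O(\<surd>v - 1)\<close>.\<close>

lemma rescaled_in_region:
  assumes centred: "(\<Sum>i\<in>UNIV. x $ i) = 0" and v: "1 < v" and all: "\<forall>q. barrier q x \<le> v"
  defines "y \<equiv> (1 / sqrt v) *\<^sub>R x"
  shows "(\<Sum>i\<in>UNIV. y $ i) = 0" "energy y \<le> E0" "\<forall>a b. \<bar>y $ a - y $ b\<bar> \<le> D"
    "x = sqrt v *\<^sub>R y" "\<And>i. \<bar>F x $ i - F y $ i\<bar> \<le> 2 * K * ((sqrt v - 1) * sqrt E0)"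
proof -
  show "(\<Sum>i\<in>UNIV. y $ i) = 0"
    using centred by (simp add: y_def sum_divide_distrib[symmetric])
  have "\<forall>q. barrier q y \<le> 1"
    using all v by (simp add: y_def barrier_scaleR power_divide divide_le_eq)
  then have "energy y \<le> E0 \<and> spread y \<le> D"
    by (simp only: barriers_le_1_iff)
  then show ey: "energy y \<le> E0" and "\<forall>a b. \<bar>y $ a - y $ b\<bar> \<le> D"
    by (simp_all add: spread_le_iff)
  show xy: "x = sqrt v *\<^sub>R y" using v by (simp add: y_def)
  show "\<bar>F x $ i - F y $ i\<bar> \<le> 2 * K * ((sqrt v - 1) * sqrt E0)" for i
  proof (rule field_diff_abs_le, rule allI)
    fix j
    have "x $ j - y $ j = (sqrt v - 1) * y $ j"
      by (subst xy) (simp add: algebra_simps)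
    then have "\<bar>x $ j - y $ j\<bar> = (sqrt v - 1) * \<bar>y $ j\<bar>"
      using v by (simp add: abs_mult)
    also have "\<dots> \<le> (sqrt v - 1) * sqrt E0"
      using order_trans[OF abs_nth_le_sqrt_energy real_sqrt_le_mono[OF ey]] v
      by (intro mult_left_mono) auto
    finally show "\<bar>x $ j - y $ j\<bar> \<le> (sqrt v - 1) * sqrt E0" .
  qed
qed

definition rate_const :: real where
  "rate_const = 8 * K * sqrt E0 / D + 4 * real CARD('n) * K"

lemma rate_const_pos: "0 < rate_const"
  unfolding rate_const_def using K_pos D_pos E0_pos by (auto intro!: add_nonneg_pos)

lemma pair_barrier_rate_le:
  assumes centred: "(\<Sum>i\<in>UNIV. x $ i) = 0" and v: "1 < v" and all: "\<forall>q. barrier q x \<le> v"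
    and active: "barrier (Some (k, l)) x = v" and ord: "x $ l \<le> x $ k"
  shows "barrier_rate (Some (k, l)) x \<le> rate_const * (v - 1)"
proof -
  define c where "c = sqrt v"
  define y where "y = (1 / sqrt v) *\<^sub>R x"
  note y = rescaled_in_region[OF centred v all, folded y_def, folded c_def]
  have c: "1 < c" "c * c = v" using v by (auto simp: c_def)
  have "(x $ k - x $ l)^2 = (c * D)^2"
    using active D_pos c by (simp add: barrier_def power_mult_distrib divide_eq_eq power2_eq_square)
  then have xkl: "x $ k - x $ l = c * D"
    using ord D_pos c by simp
  moreover have "x $ k - x $ l = c * (y $ k - y $ l)"
    by (subst (1 2) y(4)) (simp add: right_diff_distrib)
  ultimately have "c * (y $ k - y $ l) = c * D" by linarith
  then have ykl: "y $ k - y $ l = D" using c by simp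
  have "y $ l \<le> y $ m \<and> y $ m \<le> y $ k" for m
    using y(3)[rule_format, of k m] y(3)[rule_format, of m l] ykl by linarith
  then have "y \<in> feasible D E0 k l"
    unfolding feasible_def using ykl y(1,2) by (auto simp: energy_def)
  moreover have "k \<noteq> l" using ykl D_pos by auto
  ultimately have "F y $ k - F y $ l \<le> 0" by (rule field_diff_nonpos_on_face[rotated])
  then have "F x $ k - F x $ l \<le> 4 * K * ((c - 1) * sqrt E0)"
    using y(5)[of k] y(5)[of l] by linarith
  moreover have "barrier_rate (Some (k, l)) x = 2 * c * (F x $ k - F x $ l) / D"
    unfolding barrier_rate_def option.case prod.case xkl using D_pos
    by (simp add: power2_eq_square field_simps)
  ultimately have "barrier_rate (Some (k, l)) x \<le> 2 * c * (4 * K * ((c - 1) * sqrt E0)) / D"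
    using D_pos c by (simp add: divide_right_mono mult_left_mono)
  also have "\<dots> = 8 * K * sqrt E0 / D * (c * c - c)" by (simp add: algebra_simps)
  also have "\<dots> \<le> 8 * K * sqrt E0 / D * (v - 1)"
    using c K_pos D_pos E0_pos by (intro mult_left_mono) auto
  also have "\<dots> \<le> rate_const * (v - 1)"
    unfolding rate_const_def using K_pos v by (simp add: distrib_right)
  finally show ?thesis .
qed

lemma energy_barrier_rate_le:
  assumes centred: "(\<Sum>i\<in>UNIV. x $ i) = 0" and v: "1 < v" and all: "\<forall>q. barrier q x \<le> v"
    and active: "barrier None x = v"
  shows "barrier_rate None x \<le> rate_const * (v - 1)"
proof -
  define c where "c = sqrt v"
  define y where "y = (1 / sqrt v) *\<^sub>R x"
  define \<delta> where "\<delta> = 2 * K * ((c - 1) * sqrt E0)"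
  note y = rescaled_in_region[OF centred v all, folded y_def, folded c_def, folded \<delta>_def]
  have c: "1 < c" "c * c = v" using v by (auto simp: c_def)
  have "barrier None y = 1"
    using active v by (simp add: y_def barrier_scaleR power_divide)
  then have "energy y = E0" using E0_pos by (simp add: barrier_def)
  then have "(\<Sum>i\<in>UNIV. y $ i * F y $ i) \<le> 0"
    by (rule sum_mult_field_nonpos_on_sphere[OF y(1) _ y(3)])
  moreover have "(\<Sum>i\<in>UNIV. y $ i * (F x $ i - F y $ i)) \<le> (\<Sum>i\<in>(UNIV::'n set). sqrt E0 * \<delta>)"
  proof (rule sum_mono)
    fix i
    have "y $ i * (F x $ i - F y $ i) \<le> \<bar>y $ i\<bar> * \<bar>F x $ i - F y $ i\<bar>"
      by (simp add: abs_mult[symmetric])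
    also have "\<dots> \<le> sqrt E0 * \<delta>"
      using order_trans[OF abs_nth_le_sqrt_energy real_sqrt_le_mono[OF y(2)]] y(5)[of i] E0_pos
      by (intro mult_mono) auto
    finally show "y $ i * (F x $ i - F y $ i) \<le> sqrt E0 * \<delta>" .
  qed
  ultimately have "(\<Sum>i\<in>UNIV. y $ i * F x $ i) \<le> real CARD('n) * (sqrt E0 * \<delta>)"
    by (simp add: algebra_simps sum.distrib sum_subtractf)
  moreover have "(\<Sum>i\<in>UNIV. 2 * x $ i * F x $ i) = 2 * c * (\<Sum>i\<in>UNIV. y $ i * F x $ i)"
    by (subst (1) y(4)) (simp add: sum_distrib_left mult_ac)
  ultimately have "barrier_rate None x \<le> 2 * c * (real CARD('n) * (sqrt E0 * \<delta>)) / E0"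
    unfolding barrier_rate_def using c E0_pos by (simp add: divide_right_mono)
  also have "\<dots> = 4 * real CARD('n) * K * (c * c - c)"
    using E0_pos by (simp add: \<delta>_def field_simps power2_eq_square[symmetric])
  also have "\<dots> \<le> 4 * real CARD('n) * K * (v - 1)"
    using c K_pos by (intro mult_left_mono) auto
  also have "\<dots> \<le> rate_const * (v - 1)"
    unfolding rate_const_def using K_pos v D_pos E0_pos by (simp add: distrib_right)
  finally show ?thesis .
qed

lemma barrier_rate_le:
  assumes centred: "(\<Sum>i\<in>UNIV. x $ i) = 0" and v: "1 < v" and all: "\<forall>q. barrier q x \<le> v"
    and active: "barrier q x = v"
  shows "barrier_rate q x \<le> rate_const * (v - 1)"
proof (cases q)
  case None
  then show ?thesis using energy_barrier_rate_le[OF centred v all] active by simp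
next
  case (Some kl)
  then obtain k l where kl: "q = Some (k, l)" by fastforce
  consider "x $ l \<le> x $ k" | "x $ k \<le> x $ l" by linarith
  then show ?thesis
  proof cases
    case 1
    then show ?thesis using pair_barrier_rate_le[OF centred v all] active kl by simp
  next
    case 2
    have "barrier (Some (l, k)) x = barrier (Some (k, l)) x"
      by (simp add: barrier_def power2_commute)
    moreover have "barrier_rate (Some (l, k)) x = barrier_rate (Some (k, l)) x"
      by (simp add: barrier_rate_def algebra_simps)
    ultimately show ?thesis using pair_barrier_rate_le[OF centred v all, of l k] 2 active kl by simp
  qed
qed

lemma barriers_le_1:
  assumes "0 \<le> t"
  shows "barrier q (phi t) \<le> 1"
proof (rule barrier_invariant[where f = "\<lambda>q t. barrier q (phi t)"
      and f' = "\<lambda>q t. barrier_rate q (phi t)" and C = rate_const])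
  show "barrier q (phi 0) \<le> 1" for q
    using barriers_le_1_iff D0_le by blast
  show "barrier_rate q (phi s) \<le> rate_const * (v - 1)"
    if "0 \<le> s" "1 < v" "\<And>q'. barrier q' (phi s) \<le> v" "barrier q (phi s) = v" for q s v
    by (rule barrier_rate_le[OF sum_phases]) (use that in auto)
qed (use has_real_derivative_barrier rate_const_pos assms in auto)

lemma energy_le_E0: "0 \<le> t \<Longrightarrow> energy (phi t) \<le> E0"
  and spread_le_D: "0 \<le> t \<Longrightarrow> spread (phi t) \<le> D"
  using barriers_le_1_iff[of "phi t"] barriers_le_1[of t] by auto

subsection \<open>Frequency synchronisation\<close>

lemma has_real_derivative_phase_at:
  "0 < t \<Longrightarrow> ((\<lambda>t. phi t $ i) has_real_derivative F (phi t) $ i) (at t)"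
  using has_real_derivative_phase[of t i] by (simp add: at_within_atLeast_eq_at)

lemma phase_Lipschitz:
  assumes "0 < a" "a \<le> b"
  shows "\<bar>phi b $ j - phi a $ j\<bar> \<le> field_bound * (b - a)"
proof (cases "a = b")
  case False
  with assms have "a < b" by simp
  have "((\<lambda>t. phi t $ j) has_real_derivative F (phi x) $ j) (at x)" if "a \<le> x" "x \<le> b" for x
    using has_real_derivative_phase_at[of x j] assms(1) that by linarith
  from MVT2[OF \<open>a < b\<close> this] obtain z
    where "phi b $ j - phi a $ j = (b - a) * F (phi z) $ j" by blast
  then have "\<bar>phi b $ j - phi a $ j\<bar> = (b - a) * \<bar>F (phi z) $ j\<bar>"
    using \<open>a < b\<close> by (simp add: abs_mult)
  also have "\<dots> \<le> (b - a) * field_bound"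
    using field_abs_le[of "phi z" j] \<open>a < b\<close> by (intro mult_left_mono) auto
  also have "\<dots> = field_bound * (b - a)" by (rule mult.commute)
  finally show ?thesis .
qed simp

text \<open>The potential increases along the solution at rate \<open>|F|\<^sup>2\<close> and stays bounded, so
  Barbalat's lemma forces the frequencies to zero.\<close>

lemma field_along_solution_tendsto_0: "((\<lambda>t. F (phi t)) \<longlongrightarrow> 0) at_top"
proof -
  define L where "L = real CARD('n) * (4 * K * field_bound * field_bound)"
  define M where "M = (\<Sum>i\<in>UNIV. \<bar>w $ i\<bar>) * sqrt E0 + K * real CARD('n) / 2"
  have deriv: "((\<lambda>t. potential (phi t)) has_real_derivative (norm (F (phi t)))^2) (at t)"
    if "0 < t" for t
    using has_real_derivative_potential[OF ode, of t] that by (simp add: at_within_atLeast_eq_at)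
  have lip: "\<bar>(norm (F (phi b)))^2 - (norm (F (phi a)))^2\<bar> \<le> L * (b - a)"
    if "0 < a" "a \<le> b" for a b
  proof -
    have "\<forall>j. \<bar>phi b $ j - phi a $ j\<bar> \<le> field_bound * (b - a)"
      using phase_Lipschitz[OF that] by blast
    then have "\<bar>(norm (F (phi b)))^2 - (norm (F (phi a)))^2\<bar>
        \<le> real CARD('n) * (4 * K * field_bound * (field_bound * (b - a)))"
      by (rule norm_field_power2_diff_le)
    also have "\<dots> = L * (b - a)" by (simp add: L_def)
    finally show ?thesis .
  qed
  have bdd: "potential (phi t) \<le> M" if "0 < t" for t
  proof -
    have "sqrt (energy (phi t)) \<le> sqrt E0" using energy_le_E0[of t] that by simp
    then have "(\<Sum>i\<in>UNIV. \<bar>w $ i\<bar>) * sqrt (energy (phi t)) \<le> (\<Sum>i\<in>UNIV. \<bar>w $ i\<bar>) * sqrt E0"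
      by (intro mult_left_mono) (auto intro: sum_nonneg)
    then show ?thesis using potential_le[of "phi t"] unfolding M_def by linarith
  qed
  have "((\<lambda>t. (norm (F (phi t)))^2) \<longlongrightarrow> 0) at_top"
    by (rule Lipschitz_nonneg_deriv_tendsto_0[of "\<lambda>t. potential (phi t)" _ L M])
      (use deriv lip bdd in auto)
  then have "((\<lambda>t. sqrt ((norm (F (phi t)))^2)) \<longlongrightarrow> sqrt 0) at_top"
    by (rule tendsto_real_sqrt)
  then show ?thesis by (simp add: tendsto_norm_zero_iff)
qed

lemma eventually_near_equilibria:
  assumes "0 < \<epsilon>"
  shows "eventually (\<lambda>t. \<exists>y. F y = 0 \<and> dist (phi t) y < \<epsilon>) at_top"
proof (rule near_zeros_if_tendsto_0[OF compact_cball continuous_on_field _ field_along_solution_tendsto_0 assms])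
  show "eventually (\<lambda>t. phi t \<in> cball 0 (sqrt E0)) at_top"
    using eventually_ge_at_top[of 0]
    by eventually_elim (use energy_le_E0 in \<open>auto simp: energy_eq_norm_power2 real_le_rsqrt\<close>)
qed

end

theorem theorem2:
  fixes E :: "'n::finite \<Rightarrow> 'n \<Rightarrow> bool"
    and K D :: real
    and w :: "real^'n"
    and phi :: "real \<Rightarrow> real^'n"
  assumes sym: "\<And>i j. E i j \<Longrightarrow> E j i"
    and irrefl: "\<And>i. \<not> E i i"
    and conn: "graph_connected E"
    and Kpos: "K > 0"
    and wsum: "(\<Sum>i\<in>UNIV. w $ i) = 0"
    and ode: "\<And>t. t \<ge> 0 \<Longrightarrow>
       (phi has_vector_derivative kuramoto_field E K w (phi t)) (at t within {0..})"
    and init_sum: "(\<Sum>i\<in>UNIV. phi 0 $ i) = 0"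
    and D0_pos: "0 < spread (phi 0)"
    and D0_le: "spread (phi 0) \<le> D"
    and D_lt: "D < pi"
    and E0_lt: "energy (phi 0) < D^2"
    and K_ge_Kstar: "\<And>k l. k \<noteq> l \<Longrightarrow> feasible D (energy (phi 0)) k l \<noteq> {} \<Longrightarrow>
       K \<ge> Kstar_kl E w D (energy (phi 0)) k l"
    and K_ge2: "K \<ge> sigma w * D / (sqrt (energy (phi 0)) * Lconst E * sin D)"
  shows "(\<forall>t\<ge>0. spread (phi t) \<le> D) \<and>
         (\<forall>\<epsilon>>0. eventually (\<lambda>t. \<exists>y. kuramoto_field E K w y = 0 \<and> dist (phi t) y < \<epsilon>) at_top)"
proof -
  interpret kuramoto_solution E K w D phi
    by unfold_locales (use assms in auto)
  show ?thesis using spread_le_D eventually_near_equilibria by blast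
qed

end
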